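(* For an $(n,k)$ SPC product code, the block error probabilities under SC and Elias' decoding over the BEC($\epsilon$) satisfy $P_{\mathrm{SC}} \leq P_{\mathrm{E}}$.
   Context: Consider an $m$-dimensional $(n,k)$ systematic single parity-check (SPC) product code (each component code along dimension $\ell$ is an $(n_\ell,n_\ell-1)$ SPC code) used over the binary erasure channel BEC($\epsilon$). Successive cancellation (SC) decoding decodes the information bits $u_1,\dots,u_k$ in order, each decision $\hat u_i$ being based on the channel output and the previous decisions $\hat u_1,\dots,\hat u_{i-1}$ (likelihoods computed recursively across dimensions); Elias' decoding decodes the component codes dimension by dimension in one sweep and computes the likelihood of each $u_i$ without using decisions on other information bits. Over the BEC both decoders output an erasure when the two hypotheses are equally likely. $P_{\mathrm{SC}}$ and $P_{\mathrm{E}}$ denote the probabilities that the decoded vector (under SC and Elias' decoding, respectively) differs from the transmitted information vector $\boldsymbol{u}$ (an erasure counts as an error). *)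

theory Defs
  imports "HOL-Probability.Probability"
begin

(* Component lengths of the m-dimensional SPC product code: ns = [n_1,...,n_m].
   Coordinate 0 along every dimension is the parity position; information bits
   are the positions with all coordinates >= 1 (systematic encoding). *)
definition positions :: "nat list \<Rightarrow> nat list set" where
  "positions ns = {p. length p = length ns \<and> (\<forall>l<length ns. p ! l < ns ! l)}"

definition info_positions :: "nat list \<Rightarrow> nat list set" where
  "info_positions ns = {p \<in> positions ns. \<forall>l<length ns. 1 \<le> p ! l}"

(* Erasure patterns: E p = True iff code bit p is erased by the BEC. *)

(* BEC synthesized channel of the SPC kernel of size n
   (x_0 = u_0 + ... + u_(n-1), x_j = u_j for j >= 1, u_0 frozen):
   u_i (i >= 1) is erased given y and u_0..u_(i-1) iff x_i is erased and
   (x_0 is erased or some x_j with j > i is erased). *)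
definition kernel_erased :: "nat \<Rightarrow> nat \<Rightarrow> (nat \<Rightarrow> bool) \<Rightarrow> bool" where
  "kernel_erased n i e \<longleftrightarrow> e i \<and> (e 0 \<or> (\<exists>j. i < j \<and> j < n \<and> e j))"

(* Block failure of (genie-aided, equivalently actual for block error) SC decoding:
   recursive across dimensions, dimension 1 being the kernel nearest the channel;
   information bits decoded in lexicographic order. Frozen branches are skipped
   since frozen bits are known to the decoder. *)
fun sc_fail :: "nat list \<Rightarrow> (nat list \<Rightarrow> bool) \<Rightarrow> bool" where
  "sc_fail [] E = E []"
| "sc_fail (n # ns) E =
     (\<exists>i\<in>{1..<n}. sc_fail ns (\<lambda>q. kernel_erased n i (\<lambda>j. E (j # q))))"

(* One Elias step along dimension l: each erased bit is recovered by its
   (n_l, n_l - 1) SPC component iff it is the only erasure on its line. *)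
definition elias_step :: "nat list \<Rightarrow> nat \<Rightarrow> (nat list \<Rightarrow> bool) \<Rightarrow> (nat list \<Rightarrow> bool)" where
  "elias_step ns l E = (\<lambda>p. E p \<and> (\<exists>j<ns ! l. j \<noteq> p ! l \<and> E (p[l := j])))"

definition elias_final :: "nat list \<Rightarrow> (nat list \<Rightarrow> bool) \<Rightarrow> (nat list \<Rightarrow> bool)" where
  "elias_final ns E = fold (elias_step ns) [0..<length ns] E"

definition elias_fail :: "nat list \<Rightarrow> (nat list \<Rightarrow> bool) \<Rightarrow> bool" where
  "elias_fail ns E \<longleftrightarrow> (\<exists>p\<in>info_positions ns. elias_final ns E p)"

definition bec_pattern :: "nat list \<Rightarrow> real \<Rightarrow> (nat list \<Rightarrow> bool) pmf" where
  "bec_pattern ns eps = Pi_pmf (positions ns) False (\<lambda>_. bernoulli_pmf eps)"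

definition P_SC :: "nat list \<Rightarrow> real \<Rightarrow> real" where
  "P_SC ns eps = measure_pmf.prob (bec_pattern ns eps) {E. sc_fail ns E}"

definition P_E :: "nat list \<Rightarrow> real \<Rightarrow> real" where
  "P_E ns eps = measure_pmf.prob (bec_pattern ns eps) {E. elias_fail ns E}"

end

theory Submission
  imports Defs
begin

(* SC decoding fails on no more erasure patterns than Elias' decoding, so the
   inequality holds pattern by pattern. By induction on the number of dimensions: if SC fails at
   kernel bit i of the first dimension on the slice pattern, then x_i is erased
   together with another bit of its line, so it survives the first Elias step.
   The remaining Elias steps act on each slice i # _ separately, and sc_fail is
   monotone in the erasure pattern, so the induction hypothesis applies to the
   slice at i. *)

lemma sc_fail_mono:
  assumes "\<And>p. E p \<Longrightarrow> E' p" and "sc_fail ns E"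
  shows "sc_fail ns E'"
  using assms
proof (induction ns arbitrary: E E')
  case Nil
  then show ?case by simp
next
  case (Cons n ns)
  then obtain i where i: "i \<in> {1..<n}"
    and fail: "sc_fail ns (\<lambda>q. kernel_erased n i (\<lambda>j. E (j # q)))"
    by auto
  have "sc_fail ns (\<lambda>q. kernel_erased n i (\<lambda>j. E' (j # q)))"
    using Cons.prems(1) by (intro Cons.IH[OF _ fail]) (auto simp: kernel_erased_def)
  with i show ?case by auto
qed

lemma elias_step_Cons_Suc:
  "elias_step (n # ns) (Suc l) E (i # q) = elias_step ns l (\<lambda>q. E (i # q)) q"
  unfolding elias_step_def by simp

lemma fold_elias_step_map_Suc:
  "fold (elias_step (n # ns)) (map Suc ls) E (i # q) = fold (elias_step ns) ls (\<lambda>q. E (i # q)) q"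
proof (induction ls arbitrary: E)
  case Nil
  then show ?case by simp
next
  case (Cons l ls)
  have "(\<lambda>q. elias_step (n # ns) (Suc l) E (i # q)) = elias_step ns l (\<lambda>q. E (i # q))"
    by (simp add: elias_step_Cons_Suc)
  with Cons.IH[of "elias_step (n # ns) (Suc l) E"] show ?case by simp
qed

lemma elias_final_Cons:
  "elias_final (n # ns) E (i # q) = elias_final ns (\<lambda>q. elias_step (n # ns) 0 E (i # q)) q"
proof -
  have upt: "[0..<Suc (length ns)] = 0 # map Suc [0..<length ns]"
    by (simp only: upt_conv_Cons[of 0] map_Suc_upt)
  show ?thesis
    unfolding elias_final_def length_Cons upt by (simp add: fold_elias_step_map_Suc)
qed

lemma Cons_in_info_positions:
  assumes "i \<in> {1..<n}" and "q \<in> info_positions ns"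
  shows "i # q \<in> info_positions (n # ns)"
  using assms unfolding info_positions_def positions_def
  by (auto simp: nth_Cons split: nat.splits)

lemma kernel_erased_imp_elias_step:
  assumes "i \<in> {1..<n}" and "kernel_erased n i (\<lambda>j. E (j # q))"
  shows "elias_step (n # ns) 0 E (i # q)"
  using assms unfolding kernel_erased_def elias_step_def by (auto intro: exI[of _ 0])

lemma sc_fail_imp_elias_fail: "sc_fail ns E \<Longrightarrow> elias_fail ns E"
proof (induction ns arbitrary: E)
  case Nil
  then show ?case
    by (simp add: elias_fail_def elias_final_def info_positions_def positions_def)
next
  case (Cons n ns)
  then obtain i where i: "i \<in> {1..<n}"
    and fail: "sc_fail ns (\<lambda>q. kernel_erased n i (\<lambda>j. E (j # q)))"
    by auto
  have "sc_fail ns (\<lambda>q. elias_step (n # ns) 0 E (i # q))"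
    using i by (intro sc_fail_mono[OF _ fail] kernel_erased_imp_elias_step)
  then obtain q where q: "q \<in> info_positions ns"
    and "elias_final ns (\<lambda>q. elias_step (n # ns) 0 E (i # q)) q"
    using Cons.IH unfolding elias_fail_def by blast
  then have "elias_final (n # ns) E (i # q)"
    by (simp add: elias_final_Cons)
  with Cons_in_info_positions[OF i q] show ?case
    unfolding elias_fail_def by blast
qed

theorem theorem1:
  fixes ns :: "nat list" and eps :: real
  assumes "\<forall>n\<in>set ns. 2 \<le> n"
    and "0 \<le> eps" and "eps \<le> 1"
  shows "P_SC ns eps \<le> P_E ns eps"
  unfolding P_SC_def P_E_def
  by (rule measure_pmf.finite_measure_mono) (auto intro: sc_fail_imp_elias_fail)

end
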